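(* Let $n\geq 3$. For all positive integers $i,j,r,s,t$, $$\frac{A_{i+j}}{A_s}\neq\frac{A_i}{A_t}+\frac{A_j}{A_r}.$$
   Context: The integers $A_i$ are defined by $A_0=0$, $A_1=1$, $A_{i+2}=nA_{i+1}-A_i$ for $i\geq0$. *)

theory Defs
  imports Main "HOL.Rat"
begin

fun A :: "int \<Rightarrow> nat \<Rightarrow> int" where
  "A n 0 = 0"
| "A n (Suc 0) = 1"
| "A n (Suc (Suc i)) = n * A n (Suc i) - A n i"

end

theory Submission
  imports Defs
begin

(* For n >= 3 the sequence A_k = A n k grows at least like 2^k and behaves, on
   products, like an exponential: A_{p+q-1} <= A_p A_q < A_{p+q} / 2.  Hence
   A_a A_b < A_c A_d whenever a + b < c + d, and equal products force equal index
   sums.  Together with the product identity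
     A_{x+y} A_{x+k} - A_x A_{x+y+k} = A_y A_k          (valid for every n)
   this decides the equation  A_{i+j} / A_s = A_i / A_t + A_j / A_r.
   Clearing denominators gives A_{i+j} A_t A_r = A_s (A_i A_r + A_j A_t), which is
   symmetric under (i,t) <-> (j,r).  If s >= j + t (or symmetrically s >= i + r)
   either the growth estimate makes the left side too small, or s = j + t and the
   product identity reduces the equation to an impossible one; if s is smaller than
   both j + t and i + r the right side is too small. *)

lemma A_growth:
  assumes "n \<ge> 3"
  shows "0 \<le> A n k \<and> 2 * A n k < A n (Suc k)"
proof (induction k)
  case 0
  then show ?case by simp
next
  case (Suc k)
  then have nonneg: "0 \<le> A n k" and double: "2 * A n k < A n (Suc k)" by auto
  have "3 * A n (Suc k) \<le> n * A n (Suc k)"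
    using assms nonneg double by (intro mult_right_mono) auto
  moreover have "A n (Suc (Suc k)) = n * A n (Suc k) - A n k" by simp
  ultimately show ?case using nonneg double by linarith
qed

lemma A_nonneg: "n \<ge> 3 \<Longrightarrow> 0 \<le> A n k"
  using A_growth by blast

lemma A_double: "n \<ge> 3 \<Longrightarrow> 2 * A n k < A n (Suc k)"
  using A_growth by blast

lemma A_step: "n \<ge> 3 \<Longrightarrow> A n k < A n (Suc k)"
  using A_growth[of n k] by linarith

lemma A_strict_mono: "n \<ge> 3 \<Longrightarrow> k < m \<Longrightarrow> A n k < A n m"
  by (rule lift_Suc_mono_less[of "A n"]) (auto intro: A_step)

lemma A_mono: "n \<ge> 3 \<Longrightarrow> k \<le> m \<Longrightarrow> A n k \<le> A n m"
  by (rule lift_Suc_mono_le[of "A n"]) (auto intro: less_imp_le A_step)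

lemma A_pos: "n \<ge> 3 \<Longrightarrow> 0 < k \<Longrightarrow> 0 < A n k"
  using A_strict_mono[of n 0 k] by simp

text \<open>Sharper growth from index 1 on: A_{q+1} > (5/2) A_q, needed for the lower
  product bound.\<close>
lemma A_five_halves:
  assumes n: "n \<ge> 3" and q: "1 \<le> q"
  shows "5 * A n q < 2 * A n (Suc q)"
proof (cases "q = 1")
  case True
  then show ?thesis using n by simp
next
  case False
  then obtain q' where q': "q = Suc q'" and "0 < q'" using q by (cases q) auto
  have "3 * A n q \<le> n * A n q"
    using n A_pos[OF n, of q] q by (intro mult_right_mono) auto
  moreover have "2 * A n q' < A n q" using A_double[OF n, of q'] q' by simp
  ultimately show ?thesis using q' by simp
qed

lemma A_shift_identity: "A n (x + y) * A n (x + 1) - A n x * A n (x + y + 1) = A n y"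
proof (induction x)
  case 0
  then show ?case by simp
next
  case (Suc x)
  have "A n (Suc x + 1) = n * A n (x + 1) - A n x" by simp
  moreover have "A n (Suc x + y + 1) = n * A n (x + y + 1) - A n (x + y)"
    by (simp add: numeral_eq_Suc)
  ultimately show ?case using Suc by (simp add: algebra_simps)
qed

text \<open>Both sides satisfy the defining recurrence in k, so the identity follows by
  two-step induction on k from the cases k = 0 and k = 1.\<close>
lemma A_product_identity:
  "A n (x + y) * A n (x + k) - A n x * A n (x + y + k) = A n y * A n k"
proof (induction n k rule: A.induct)
  case (1 n)
  then show ?case by simp
next
  case (2 n)
  then show ?case using A_shift_identity[of n x y] by simp
next
  case (3 n k)
  have "A n (x + Suc (Suc k)) = n * A n (x + Suc k) - A n (x + k)" by simp
  moreover have "A n (x + y + Suc (Suc k)) = n * A n (x + y + Suc k) - A n (x + y + k)"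
    by simp
  moreover have "A n (Suc (Suc k)) = n * A n (Suc k) - A n k" by simp
  ultimately show ?case using 3 by algebra
qed

lemma A_addition: "A n (p + q + 1) = A n (p + 1) * A n (q + 1) - A n p * A n q"
  using A_product_identity[of n 1 p q] by (simp add: algebra_simps)

lemma A_product_upper:
  assumes n: "n \<ge> 3" and "1 \<le> p" "1 \<le> q"
  shows "A n (p + q - 1) \<le> A n p * A n q"
proof -
  obtain p' q' where pq: "p = p' + 1" "q = q' + 1"
    using assms by (metis add.commute le_Suc_ex)
  have "0 \<le> A n p' * A n q'" using A_nonneg[OF n] by simp
  then show ?thesis using A_addition[of n p' q'] pq by simp
qed

lemma A_product_lower:
  assumes n: "n \<ge> 3" and p: "1 \<le> p" and q: "1 \<le> q"
  shows "2 * (A n p * A n q) < A n (p + q)"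
proof -
  obtain p' where p': "p = p' + 1" using p by (metis add.commute le_Suc_ex)
  have Ap: "0 < A n p" using A_pos n p by simp
  have "A n p * (5 * A n q) < A n p * (2 * A n (Suc q))"
    using A_five_halves[OF n q] Ap by (intro mult_strict_left_mono) auto
  moreover have "(2 * A n p') * A n q \<le> A n p * A n q"
    using A_double[OF n, of p'] p' A_nonneg[OF n, of q] by (intro mult_right_mono) auto
  ultimately show ?thesis using A_addition[of n p' q] p' by (simp add: algebra_simps)
qed

lemma A_product_less:
  assumes n: "n \<ge> 3" and "1 \<le> a" "1 \<le> b" "1 \<le> c" "1 \<le> d" "a + b < c + d"
  shows "A n a * A n b < A n c * A n d"
proof -
  have "2 * (A n a * A n b) < A n (a + b)" using A_product_lower assms by simp
  moreover have "0 \<le> A n a * A n b" using A_nonneg[OF n] by simp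
  moreover have "A n (a + b) \<le> A n (c + d - 1)" using A_mono assms by simp
  moreover have "A n (c + d - 1) \<le> A n c * A n d" using A_product_upper assms by simp
  ultimately show ?thesis by linarith
qed

lemma A_product_eq_imp_index_sum_eq:
  assumes "n \<ge> 3" "1 \<le> a" "1 \<le> b" "1 \<le> c" "1 \<le> d" "A n a * A n b = A n c * A n d"
  shows "a + b = c + d"
  using A_product_less[of n a b c d] A_product_less[of n c d a b] assms
  by (metis less_irrefl nat_neq_iff)

text \<open>Boundary case s = j + t with i \<le> t, say t = i + d.  The product identity turns
  the equation into A_r A_d = A_{i+j+d} A_{i+d}; then r = 2i + j + d, and the product
  identity once more shows the two sides differ by A_i A_{i+j} > 0.\<close>
lemma equation_boundary_short:
  assumes n: "n \<ge> 3" and pos: "0 < i" "0 < j" "0 < r" and d: "0 < d"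
    and E: "A n (i + j) * A n (i + d) * A n r
            = A n (i + j + d) * (A n i * A n r + A n j * A n (i + d))"
  shows False
proof -
  have "A n j * (A n r * A n d) = A n j * (A n (i + j + d) * A n (i + d))"
    using E A_product_identity[of n i j d] by algebra
  then have eq: "A n r * A n d = A n (i + j + d) * A n (i + d)"
    using A_pos[OF n pos(2)] by simp
  then have "r + d = (i + j + d) + (i + d)"
    using A_product_eq_imp_index_sum_eq[OF n] pos d by simp
  then have r: "r = d + i + (i + j)" by simp
  have "A n (d + i) * A n (d + (i + j)) - A n d * A n (d + i + (i + j)) = A n i * A n (i + j)"
    by (rule A_product_identity)
  moreover have "0 < A n i * A n (i + j)" using A_pos[OF n] pos by simp
  ultimately show False using eq r by (simp add: ac_simps)
qed

text \<open>Boundary case s = j + t with i > t, say i = t + d: the product identity makes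
  the equation equate zero with a sum of positive terms.\<close>
lemma equation_boundary_long:
  assumes n: "n \<ge> 3" and pos: "0 < j" "0 < r" "0 < t" and d: "0 < d"
    and E: "A n (t + d + j) * A n t * A n r
            = A n (j + t) * (A n (t + d) * A n r + A n j * A n t)"
  shows False
proof -
  have "A n r * (A n d * A n j) + A n (j + t) * A n j * A n t = 0"
    using E A_product_identity[of n t d j] by (simp add: algebra_simps)
  moreover have "0 < A n r * (A n d * A n j)" using A_pos[OF n] pos d by simp
  moreover have "0 < A n (j + t) * A n j * A n t" using A_pos[OF n] pos by simp
  ultimately show False by linarith
qed

text \<open>No solution with s \<ge> j + t: for s > j + t already A_{i+j} A_t < A_s A_i.\<close>
lemma equation_large_s:
  assumes n: "n \<ge> 3" and pos: "0 < i" "0 < j" "0 < r" "0 < t" and s: "j + t \<le> s"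
    and E: "A n (i + j) * A n t * A n r = A n s * (A n i * A n r + A n j * A n t)"
  shows False
proof (cases "s = j + t")
  case True
  show False
  proof (cases "i \<le> t")
    case True
    then obtain d where t: "t = i + d" using le_Suc_ex by blast
    have "d \<noteq> 0"
    proof
      assume "d = 0"
      then have "A n (i + j) * (A n j * A n i) = 0"
        using E \<open>s = j + t\<close> t by (simp add: algebra_simps)
      then show False
        using A_pos[OF n, of "i + j"] A_pos[OF n, of j] A_pos[OF n, of i] pos by simp
    qed
    then show False
      using equation_boundary_short[OF n pos(1-3), of d] E \<open>s = j + t\<close> t
      by (simp add: ac_simps)
  next
    case False
    then obtain d where i: "i = t + d" and "0 < d"
      by (metis le_add_diff_inverse less_imp_le_nat not_le zero_less_diff)
    then show False
      using equation_boundary_long[OF n pos(2-4) \<open>0 < d\<close>] E \<open>s = j + t\<close>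
      by (simp add: ac_simps)
  qed
next
  case False
  then have "A n (i + j) * A n t < A n s * A n i"
    using A_product_less[OF n, of "i + j" t s i] pos s by simp
  then have "A n (i + j) * A n t * A n r < A n s * A n i * A n r"
    using A_pos[OF n pos(3)] by simp
  moreover have "0 < A n s * (A n j * A n t)" using A_pos[OF n] pos s by simp
  ultimately show False using E by (simp add: algebra_simps)
qed

text \<open>No solution with s below both j + t and i + r: then
  A_s (A_i A_r + A_j A_t) \<le> 2 A_i A_j A_t A_r < A_{i+j} A_t A_r.\<close>
lemma equation_small_s:
  assumes n: "n \<ge> 3" and pos: "0 < i" "0 < j" "0 < r" "0 < t"
    and s: "s < j + t" "s < i + r"
    and E: "A n (i + j) * A n t * A n r = A n s * (A n i * A n r + A n j * A n t)"
  shows False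
proof -
  have tr: "0 < A n t * A n r" and ir: "0 < A n i * A n r" and jt: "0 < A n j * A n t"
    using A_pos[OF n] pos by simp_all
  have "A n s \<le> A n (j + t - 1)" using A_mono[OF n] s by simp
  also have "\<dots> \<le> A n j * A n t" using A_product_upper[OF n] pos by simp
  finally have s_jt: "A n s \<le> A n j * A n t" .
  have "A n s \<le> A n (i + r - 1)" using A_mono[OF n] s by simp
  also have "\<dots> \<le> A n i * A n r" using A_product_upper[OF n] pos by simp
  finally have s_ir: "A n s \<le> A n i * A n r" .
  have "A n s * (A n i * A n r) \<le> (A n j * A n t) * (A n i * A n r)"
    using s_jt ir by (intro mult_right_mono) auto
  moreover have "A n s * (A n j * A n t) \<le> (A n i * A n r) * (A n j * A n t)"
    using s_ir jt by (intro mult_right_mono) auto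
  moreover have "2 * (A n i * A n j) * (A n t * A n r) < A n (i + j) * (A n t * A n r)"
    using A_product_lower[OF n, of i j] pos tr by (intro mult_strict_right_mono) auto
  ultimately show False using E by (simp add: algebra_simps)
qed

theorem lemma4p5:
  fixes n :: int and i j r s t :: nat
  assumes "n \<ge> 3" and "i > 0" and "j > 0" and "r > 0" and "s > 0" and "t > 0"
  shows "(of_int (A n (i + j)) / of_int (A n s) :: rat)
           \<noteq> of_int (A n i) / of_int (A n t) + of_int (A n j) / of_int (A n r)"
proof
  assume h: "(of_int (A n (i + j)) / of_int (A n s) :: rat)
           = of_int (A n i) / of_int (A n t) + of_int (A n j) / of_int (A n r)"
  note n = assms(1)
  have "0 < A n s" "0 < A n t" "0 < A n r"
    using A_pos[OF n] assms by auto
  then have "(of_int (A n (i + j) * A n t * A n r) :: rat)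
             = of_int (A n s * (A n i * A n r + A n j * A n t))"
    using h by (simp add: field_simps)
  then have E: "A n (i + j) * A n t * A n r = A n s * (A n i * A n r + A n j * A n t)"
    using of_int_eq_iff by blast
  then have E': "A n (j + i) * A n r * A n t = A n s * (A n j * A n t + A n i * A n r)"
    by (simp add: ac_simps)
  consider "j + t \<le> s" | "i + r \<le> s" | "s < j + t" "s < i + r" by linarith
  then show False
    using equation_large_s[OF n, of i j r t s] equation_large_s[OF n, of j i t r s]
      equation_small_s[OF n, of i j r t s] E E' assms
    by cases simp_all
qed

end
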